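(* For every set $X=\{X^1,\dots,X^m\}\subseteq S_n$ of $m\ge1$ distinct elements, $$|\mathrm{Elim}(X)|=\sum_{k=1}^m\ \sum_{1\le i_1<\cdots<i_k\le m}3^{z_{X(i_1,\dots,i_k)}}\Big(-2^{k-1}+\sum_{\alpha\in S_k}(-1)^{z(\alpha)+k+1}\,2^{\,z(\alpha)+|\mathrm{BSp}(X(i_1,\dots,i_k),\alpha)|}\Big),$$ where $X(i_1,\dots,i_k)=\{X^{i_1},\dots,X^{i_k}\}$.
   Context: $S_n$ is the set of all nonzero $n$-tuples in $\{-1,0,1\}^n$ whose first nonzero entry equals $1$. A tuple $t=(t_1,\dots,t_n)\in\{1,0,-1,u\}^n$ ($u$ a formal symbol) eliminates $s\in S_n$ if: (i) $t_i\neq0$ and $s_i\neq0$ for some $i$; (ii) there is $k\in\{+1,-1\}$ with $t_i=ks_i$ for all $i$ with $s_i\neq0$ and $t_i\neq0$; (iii) $s_i=0$ whenever $t_i=u$. For $X\subseteq S_n$, $\mathrm{Elim}(X)$ is the set of elements of $S_n$ eliminated by at least one element of $X$. For $Y=\{Y^1,\dots,Y^k\}\subseteq S_n$, $M_Y$ is the $k\times n$ matrix whose $i$-th row is $Y^i$ and $z_Y$ is the number of zero columns of $M_Y$. For a tuple $\alpha$, $z(\alpha)$ is the number of its zero coordinates. For $\alpha\in S_k$, $\mathrm{BSp}(Y,\alpha)$ is the set of indices $c\in\{1,\dots,n\}$ such that the $c$-th column of $M_Y$ is nonzero and equals $\pm(a_1\alpha_1,\dots,a_k\alpha_k)^T$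 for some $(a_1,\dots,a_k)\in\{0,1\}^k\setminus\{(0,\dots,0)\}$. *)

theory Defs
  imports Main
begin

text \<open>n-tuples are represented as lists of length n (0-based indices).
  Tuples over {1,0,-1,u} are represented as int option lists, None standing for u.\<close>

definition S :: "nat \<Rightarrow> int list set" where
  "S n = {s. length s = n \<and> set s \<subseteq> {-1, 0, 1} \<and> (\<exists>i<n. s ! i \<noteq> 0)
            \<and> (\<exists>i<n. s ! i = 1 \<and> (\<forall>j<i. s ! j = 0))}"

definition eliminates :: "nat \<Rightarrow> int option list \<Rightarrow> int list \<Rightarrow> bool" where
  "eliminates n t s \<longleftrightarrow>
     (\<exists>i<n. t ! i \<noteq> Some 0 \<and> s ! i \<noteq> 0) \<and>
     (\<exists>k\<in>{1, -1::int}. \<forall>i<n. s ! i \<noteq> 0 \<and> t ! i \<noteq> Some 0 \<longrightarrow> t ! i = Some (k * s ! i)) \<and>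
     (\<forall>i<n. t ! i = None \<longrightarrow> s ! i = 0)"

definition Elim :: "nat \<Rightarrow> int list set \<Rightarrow> int list set" where
  "Elim n X = {s \<in> S n. \<exists>t\<in>X. eliminates n (map Some t) s}"

definition zcols :: "nat \<Rightarrow> int list list \<Rightarrow> nat" where
  "zcols n Y = card {c. c < n \<and> (\<forall>i<length Y. Y ! i ! c = 0)}"

definition zcount :: "int list \<Rightarrow> nat" where
  "zcount a = card {i. i < length a \<and> a ! i = 0}"

definition BSp :: "nat \<Rightarrow> int list list \<Rightarrow> int list \<Rightarrow> nat set" where
  "BSp n Y \<alpha> = {c. c < n \<and> (\<exists>i<length Y. Y ! i ! c \<noteq> 0) \<and>
      (\<exists>a :: int list. length a = length Y \<and> set a \<subseteq> {0, 1} \<and> (\<exists>i<length a. a ! i \<noteq> 0) \<and>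
         (\<exists>e\<in>{1, -1::int}. \<forall>i<length Y. Y ! i ! c = e * (a ! i * \<alpha> ! i)))}"

definition subrows :: "int list list \<Rightarrow> nat set \<Rightarrow> int list list" where
  "subrows xs I = map (\<lambda>j. xs ! j) (sorted_list_of_set I)"

end

theory Submission
  imports Defs
begin

text \<open>Inclusion-exclusion over the rows reduces the count to the number of s \<in> S_n eliminated
  by every row of a subfamily Y = (Y^1, ..., Y^k). Elimination is invariant under s \<mapsto> -s, and
  S_n together with -S_n is {-1,0,1}^n without the zero tuple, so this number is half a sum over all
  of {-1,0,1}^n. For a single row t one has
  [t eliminates s] = [t = s on the common support] + [t = -s there] - 2 [the supports are disjoint];
  multiplying these expansions over the rows gives a sum over \<alpha> \<in> {-1,0,1}^k. For fixed \<alpha> the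
  conditions decouple over the columns c: a zero column of Y leaves all three values of s_c, a
  column in BSp(Y, \<alpha>) leaves two, every other column only s_c = 0. The sum over \<alpha> is folded
  onto S_k by the same symmetry, the zero \<alpha> giving the term -2^(k-1).\<close>

definition ternary_lists :: "nat \<Rightarrow> int list set" where
  "ternary_lists n = {s. set s \<subseteq> {-1, 0, 1} \<and> length s = n}"

lemma finite_ternary_lists: "finite (ternary_lists n)"
  unfolding ternary_lists_def by (rule finite_lists_length_eq) simp

lemma sum_lists_length_prod:
  fixes f :: "nat \<Rightarrow> 'a \<Rightarrow> 'b::comm_semiring_1"
  assumes "finite A"
  shows "(\<Sum>l\<in>{l. set l \<subseteq> A \<and> length l = k}. \<Prod>j<k. f j (l ! j)) = (\<Prod>j<k. \<Sum>a\<in>A. f j a)"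
proof (induction k arbitrary: f)
  case 0
  have "{l. set l \<subseteq> A \<and> length l = 0} = {[]}" by auto
  then show ?case by simp
next
  case (Suc k)
  let ?L = "{l. set l \<subseteq> A \<and> length l = k}"
  have inj: "inj_on (\<lambda>(l, a). a # l) (?L \<times> A)" by (auto simp: inj_on_def)
  have "(\<Sum>l\<in>{l. set l \<subseteq> A \<and> length l = Suc k}. \<Prod>j<Suc k. f j (l ! j))
      = (\<Sum>(l, a)\<in>?L \<times> A. f 0 a * (\<Prod>j<k. f (Suc j) (l ! j)))"
    unfolding lists_length_Suc_eq
    by (subst sum.reindex[OF inj]) (simp add: case_prod_beta prod.lessThan_Suc_shift del: prod.lessThan_Suc)
  also have "\<dots> = (\<Sum>a\<in>A. f 0 a) * (\<Sum>l\<in>?L. \<Prod>j<k. f (Suc j) (l ! j))"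
    by (simp add: sum.cartesian_product[symmetric] sum_product sum.swap[of _ A])
  also have "\<dots> = (\<Prod>j<Suc k. \<Sum>a\<in>A. f j a)"
    using Suc.IH[of "\<lambda>j. f (Suc j)"] by (simp add: prod.lessThan_Suc_shift del: prod.lessThan_Suc)
  finally show ?case .
qed

lemma prod_of_bool_all: "(\<Prod>j<(k::nat). of_bool (P j) :: 'a::comm_semiring_1) = of_bool (\<forall>j<k. P j)"
  by (induction k) (auto simp: less_Suc_eq)

lemma sum_nonempty_subsets_by_card:
  assumes "finite A"
  shows "(\<Sum>B | B \<subseteq> A \<and> B \<noteq> {}. g B) = (\<Sum>k=1..card A. \<Sum>B | B \<subseteq> A \<and> card B = k. g B)"
proof -
  let ?N = "{B. B \<subseteq> A \<and> B \<noteq> {}}"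
  have fin: "finite ?N" using assms by simp
  have card_range: "card ` ?N \<subseteq> {1..card A}"
    using assms finite_subset by (fastforce simp: Suc_le_eq card_gt_0_iff card_mono)
  have "{B \<in> ?N. card B = k} = {B. B \<subseteq> A \<and> card B = k}" if "k \<in> {1..card A}" for k
    using that assms by (auto intro: finite_subset)
  then show ?thesis
    using sum.group[OF fin finite_atLeastAtMost card_range, of g] by simp
qed

lemma S_iff: "s \<in> S n \<longleftrightarrow> s \<in> ternary_lists n \<and> (\<exists>i<n. s ! i = 1 \<and> (\<forall>j<i. s ! j = 0))"
  unfolding S_def ternary_lists_def by force

lemma S_subset_ternary_lists: "S n \<subseteq> ternary_lists n"
  using S_iff by blast

lemma finite_S: "finite (S n)"
  using finite_subset[OF S_subset_ternary_lists finite_ternary_lists] .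

lemma ternary_lists_nonzero_cases:
  assumes "s \<in> ternary_lists n" "s \<noteq> replicate n 0"
  shows "s \<in> S n \<or> map uminus s \<in> S n"
proof -
  have len: "length s = n" and ternary: "set s \<subseteq> {-1, 0, 1}"
    using assms(1) unfolding ternary_lists_def by auto
  have "\<exists>i<n. s ! i \<noteq> 0"
    using assms(2) len by (auto intro!: nth_equalityI)
  then obtain i where i: "i < n" "s ! i \<noteq> 0" and before: "\<forall>j<i. s ! j = 0"
    using exists_least_iff[of "\<lambda>i. i < n \<and> s ! i \<noteq> 0"] by (metis less_trans)
  have "s ! i \<in> {-1, 1}" using i len ternary nth_mem by fastforce
  then show ?thesis
    using i before len assms(1) unfolding S_iff ternary_lists_def by auto
qed

lemma ternary_lists_remove_zero: "ternary_lists n - {replicate n 0} = S n \<union> map uminus ` S n"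
proof
  show "ternary_lists n - {replicate n 0} \<subseteq> S n \<union> map uminus ` S n"
  proof
    fix s assume "s \<in> ternary_lists n - {replicate n 0}"
    moreover have "s = map uminus (map uminus s)" by simp
    ultimately show "s \<in> S n \<union> map uminus ` S n"
      using ternary_lists_nonzero_cases by blast
  qed
  have nonzero: "s \<in> ternary_lists n - {replicate n 0} \<and> map uminus s \<in> ternary_lists n - {replicate n 0}"
    if s: "s \<in> S n" for s
  proof -
    obtain i where i: "i < n" "s ! i = 1" and len: "length s = n" and ternary: "set s \<subseteq> {-1, 0, 1}"
      using s unfolding S_iff ternary_lists_def by blast
    have "s \<noteq> replicate n 0" using i by (metis nth_replicate zero_neq_one)
    moreover have "map uminus s \<noteq> replicate n 0"
      using i len by (metis nth_map nth_replicate neg_equal_0_iff_equal zero_neq_one)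
    ultimately show ?thesis using len ternary unfolding ternary_lists_def by auto
  qed
  show "S n \<union> map uminus ` S n \<subseteq> ternary_lists n - {replicate n 0}"
  proof
    fix s assume "s \<in> S n \<union> map uminus ` S n"
    then obtain t where "t \<in> S n" "s = t \<or> s = map uminus t" by blast
    then show "s \<in> ternary_lists n - {replicate n 0}" using nonzero by auto
  qed
qed

lemma S_disjoint_uminus: "S n \<inter> map uminus ` S n = {}"
proof (rule ccontr)
  assume "S n \<inter> map uminus ` S n \<noteq> {}"
  then obtain t where "t \<in> S n" "map uminus t \<in> S n" by blast
  then obtain i i' where
    i: "i < n" "map uminus t ! i = 1" "\<forall>j<i. map uminus t ! j = 0" and
    i': "i' < n" "t ! i' = 1" "\<forall>j<i'. t ! j = 0" and "length t = n"
    unfolding S_iff ternary_lists_def by blast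
  then have "\<forall>j<i. t ! j = 0" "t ! i = -1" by auto
  then show False using i' by (cases i i' rule: linorder_cases) auto
qed

lemma sum_ternary_lists_symmetric:
  fixes g :: "int list \<Rightarrow> 'a::comm_semiring_1"
  assumes "\<And>s. s \<in> ternary_lists n \<Longrightarrow> g (map uminus s) = g s"
  shows "(\<Sum>s\<in>ternary_lists n. g s) = g (replicate n 0) + 2 * (\<Sum>s\<in>S n. g s)"
proof -
  have zero: "replicate n 0 \<in> ternary_lists n" unfolding ternary_lists_def by auto
  have inj: "inj_on (map uminus) (S n)" by (auto simp: inj_on_def)
  have "(\<Sum>s\<in>map uminus ` S n. g s) = (\<Sum>s\<in>S n. g s)"
    using assms S_subset_ternary_lists by (auto simp: sum.reindex[OF inj] intro: sum.cong)
  then show ?thesis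
    using sum.remove[OF finite_ternary_lists zero, of g] finite_S S_disjoint_uminus
    by (simp add: ternary_lists_remove_zero sum.union_disjoint mult_2)
qed

lemma eliminates_map_Some_iff:
  assumes "length t = n"
  shows "eliminates n (map Some t) s \<longleftrightarrow>
     (\<exists>i<n. t ! i \<noteq> 0 \<and> s ! i \<noteq> 0) \<and>
     (\<exists>e\<in>{1, -1::int}. \<forall>i<n. s ! i \<noteq> 0 \<and> t ! i \<noteq> 0 \<longrightarrow> t ! i = e * s ! i)"
  using assms unfolding eliminates_def by auto

lemma eliminates_uminus:
  assumes "length t = n" "length s = n"
  shows "eliminates n (map Some t) (map uminus s) \<longleftrightarrow> eliminates n (map Some t) s"
proof -
  have "(\<exists>e\<in>{1, -1::int}. \<forall>i<n. s ! i \<noteq> 0 \<and> t ! i \<noteq> 0 \<longrightarrow> t ! i = e * - s ! i) \<longleftrightarrow>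
        (\<exists>e\<in>{1, -1::int}. \<forall>i<n. s ! i \<noteq> 0 \<and> t ! i \<noteq> 0 \<longrightarrow> t ! i = e * s ! i)"
    by auto
  moreover have "map uminus s ! i = - s ! i" if "i < n" for i
    using that assms(2) by simp
  ultimately show ?thesis
    by (simp add: eliminates_map_Some_iff[OF assms(1)] cong: conj_cong)
qed

definition elim_weight :: "int \<Rightarrow> int" where
  "elim_weight a = (if a = 0 then -2 else 1)"

definition scaled_on_support :: "nat \<Rightarrow> int list \<Rightarrow> int \<Rightarrow> int list \<Rightarrow> bool" where
  "scaled_on_support n t a s \<longleftrightarrow> (\<forall>c<n. s ! c \<noteq> 0 \<and> t ! c \<noteq> 0 \<longrightarrow> a \<noteq> 0 \<and> t ! c = a * s ! c)"

lemma of_bool_eliminates: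
  assumes "length t = n"
  shows "of_bool (eliminates n (map Some t) s) =
    (\<Sum>a\<in>{-1, 0, 1}. elim_weight a * of_bool (scaled_on_support n t a s))"
proof (cases "\<exists>i<n. t ! i \<noteq> 0 \<and> s ! i \<noteq> 0")
  case False
  then have "scaled_on_support n t a s" for a
    unfolding scaled_on_support_def by auto
  moreover have "\<not> eliminates n (map Some t) s"
    using False by (simp add: eliminates_map_Some_iff[OF assms])
  ultimately show ?thesis by (simp add: elim_weight_def)
next
  case True
  then obtain i where i: "i < n" "t ! i \<noteq> 0" "s ! i \<noteq> 0" by blast
  have "\<not> scaled_on_support n t 0 s" "\<not> (scaled_on_support n t 1 s \<and> scaled_on_support n t (-1) s)"
    using i unfolding scaled_on_support_def by force+
  moreover have "eliminates n (map Some t) s \<longleftrightarrow> scaled_on_support n t 1 s \<or> scaled_on_support n t (-1) s"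
    using True unfolding eliminates_map_Some_iff[OF assms] scaled_on_support_def by auto
  ultimately show ?thesis by (auto simp: elim_weight_def)
qed

lemma of_bool_eliminates_all:
  assumes "\<And>j. j < k \<Longrightarrow> length (Y ! j) = n"
  shows "of_bool (\<forall>j<k. eliminates n (map Some (Y ! j)) s) =
    (\<Sum>\<alpha>\<in>ternary_lists k. \<Prod>j<k. elim_weight (\<alpha> ! j) * of_bool (scaled_on_support n (Y ! j) (\<alpha> ! j) s))"
proof -
  have "(\<Sum>\<alpha>\<in>ternary_lists k. \<Prod>j<k. elim_weight (\<alpha> ! j) * of_bool (scaled_on_support n (Y ! j) (\<alpha> ! j) s))
      = (\<Prod>j<k. \<Sum>a\<in>{-1, 0, 1}. elim_weight a * of_bool (scaled_on_support n (Y ! j) a s))"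
    unfolding ternary_lists_def by (rule sum_lists_length_prod) simp
  also have "\<dots> = (\<Prod>j<k. of_bool (eliminates n (map Some (Y ! j)) s))"
    using of_bool_eliminates assms by (intro prod.cong) auto
  finally show ?thesis by (simp add: prod_of_bool_all)
qed

definition column_compatible :: "int list list \<Rightarrow> int list \<Rightarrow> nat \<Rightarrow> int \<Rightarrow> bool" where
  "column_compatible Y \<alpha> c x \<longleftrightarrow>
     (\<forall>j<length Y. x \<noteq> 0 \<and> Y ! j ! c \<noteq> 0 \<longrightarrow> \<alpha> ! j \<noteq> 0 \<and> Y ! j ! c = \<alpha> ! j * x)"

lemma column_compatible_uminus:
  assumes "length \<alpha> = length Y"
  shows "column_compatible Y (map uminus \<alpha>) c x \<longleftrightarrow> column_compatible Y \<alpha> c (- x)"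
  using assms unfolding column_compatible_def by auto

lemma BSp_iff_column_compatible:
  assumes "length \<alpha> = length Y"
  shows "c \<in> BSp n Y \<alpha> \<longleftrightarrow> c < n \<and> (\<exists>i<length Y. Y ! i ! c \<noteq> 0) \<and>
    (column_compatible Y \<alpha> c 1 \<or> column_compatible Y \<alpha> c (-1))"
proof
  assume "c \<in> BSp n Y \<alpha>"
  then obtain a e where c: "c < n" "\<exists>i<length Y. Y ! i ! c \<noteq> 0" and
    a: "length a = length Y" "set a \<subseteq> {0, 1}" and e: "e \<in> {1, -1::int}" and
    col: "\<forall>i<length Y. Y ! i ! c = e * (a ! i * \<alpha> ! i)"
    unfolding BSp_def by blast
  have "a ! j = 1" "\<alpha> ! j \<noteq> 0" if "j < length Y" "Y ! j ! c \<noteq> 0" for j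
  proof -
    have "a ! j \<in> {0, 1}" using that(1) a nth_mem by (metis subsetD)
    then show "a ! j = 1" "\<alpha> ! j \<noteq> 0" using that col by auto
  qed
  then have "column_compatible Y \<alpha> c e"
    using col unfolding column_compatible_def by simp
  then show "c < n \<and> (\<exists>i<length Y. Y ! i ! c \<noteq> 0) \<and>
      (column_compatible Y \<alpha> c 1 \<or> column_compatible Y \<alpha> c (-1))"
    using c e by auto
next
  assume c: "c < n \<and> (\<exists>i<length Y. Y ! i ! c \<noteq> 0) \<and>
    (column_compatible Y \<alpha> c 1 \<or> column_compatible Y \<alpha> c (-1))"
  then obtain e where e: "e \<in> {1, -1::int}" "column_compatible Y \<alpha> c e" by auto
  define a :: "int list" where "a = map (\<lambda>i. of_bool (Y ! i ! c \<noteq> 0)) [0..<length Y]"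
  have "length a = length Y" "set a \<subseteq> {0, 1}" "\<exists>i<length a. a ! i \<noteq> 0"
    using c unfolding a_def by auto
  moreover have "\<forall>i<length Y. Y ! i ! c = e * (a ! i * \<alpha> ! i)"
    using e unfolding a_def column_compatible_def by auto
  ultimately show "c \<in> BSp n Y \<alpha>"
    unfolding BSp_def using c e(1) by blast
qed

lemma BSp_uminus:
  assumes "length \<alpha> = length Y"
  shows "BSp n Y (map uminus \<alpha>) = BSp n Y \<alpha>"
  using assms by (auto simp: BSp_iff_column_compatible column_compatible_uminus)

lemma BSp_replicate_zero: "BSp n Y (replicate (length Y) 0) = {}"
  unfolding BSp_def by auto

lemma zcount_uminus: "zcount (map uminus a) = zcount a"
  unfolding zcount_def by (rule arg_cong[where f = card]) auto

lemma zcount_replicate_zero: "zcount (replicate k 0) = k"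
proof -
  have "{i. i < length (replicate k (0::int)) \<and> replicate k (0::int) ! i = 0} = {..<k}" by auto
  then show ?thesis unfolding zcount_def by simp
qed

lemma sum_column_compatible:
  assumes "length \<alpha> = length Y" "c < n"
  shows "(\<Sum>x\<in>{-1, 0, 1}. of_bool (column_compatible Y \<alpha> c x) :: int) =
    (if \<forall>i<length Y. Y ! i ! c = 0 then 3 else if c \<in> BSp n Y \<alpha> then 2 else 1)"
proof (cases "\<forall>i<length Y. Y ! i ! c = 0")
  case True
  then have "column_compatible Y \<alpha> c x" for x
    unfolding column_compatible_def by auto
  then show ?thesis using True by simp
next
  case False
  then obtain i where "i < length Y" "Y ! i ! c \<noteq> 0" by blast
  then have "\<not> (column_compatible Y \<alpha> c 1 \<and> column_compatible Y \<alpha> c (-1))"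
    unfolding column_compatible_def by force
  moreover have "column_compatible Y \<alpha> c 0"
    unfolding column_compatible_def by simp
  ultimately show ?thesis
    using False assms by (auto simp: BSp_iff_column_compatible)
qed

lemma prod_lessThan_three_two:
  fixes n :: nat
  assumes "Z \<subseteq> {..<n}" "B \<subseteq> {..<n}" "Z \<inter> B = {}"
  shows "(\<Prod>c<n. if c \<in> Z then 3 else if c \<in> B then 2 else 1 :: 'a::comm_semiring_1) =
    3 ^ card Z * 2 ^ card B"
proof -
  have fin: "finite Z" "finite B"
    using finite_subset[OF assms(1)] finite_subset[OF assms(2)] by auto
  have "(\<Prod>c<n. if c \<in> Z then 3 else if c \<in> B then 2 else 1 :: 'a) =
      (\<Prod>c\<in>Z \<union> B. if c \<in> Z then 3 else if c \<in> B then 2 else 1)"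
    using assms by (intro prod.mono_neutral_right) auto
  also have "\<dots> = 3 ^ card Z * 2 ^ card B"
  proof -
    have "(\<Prod>c\<in>B. if c \<in> Z then 3 else if c \<in> B then 2 else 1) = (\<Prod>c\<in>B. 2 :: 'a)"
      using assms(3) by (intro prod.cong) auto
    then show ?thesis using fin assms(3) by (simp add: prod.union_disjoint)
  qed
  finally show ?thesis .
qed

lemma prod_elim_weight: "(\<Prod>j<length \<alpha>. elim_weight (\<alpha> ! j)) = (-2) ^ zcount \<alpha>"
proof -
  have "{..<length \<alpha>} \<inter> {j. \<alpha> ! j = 0} = {j. j < length \<alpha> \<and> \<alpha> ! j = 0}" by auto
  then show ?thesis unfolding elim_weight_def zcount_def by (simp add: prod.If_cases)
qed

lemma sum_ternary_lists_scaled_on_support: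
  assumes "length \<alpha> = length Y"
  shows "(\<Sum>s\<in>ternary_lists n. \<Prod>j<length Y.
      elim_weight (\<alpha> ! j) * of_bool (scaled_on_support n (Y ! j) (\<alpha> ! j) s)) =
    (-2) ^ zcount \<alpha> * (3 ^ zcols n Y * 2 ^ card (BSp n Y \<alpha>))"
proof -
  let ?Z = "{c. c < n \<and> (\<forall>i<length Y. Y ! i ! c = 0)}"
  have columnwise: "(\<Prod>j<length Y. of_bool (scaled_on_support n (Y ! j) (\<alpha> ! j) s)) =
      (\<Prod>c<n. of_bool (column_compatible Y \<alpha> c (s ! c)) :: int)" for s
    unfolding prod_of_bool_all scaled_on_support_def column_compatible_def
    by (rule arg_cong[where f = of_bool]) blast
  have "(\<Sum>s\<in>ternary_lists n. \<Prod>j<length Y.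
      elim_weight (\<alpha> ! j) * of_bool (scaled_on_support n (Y ! j) (\<alpha> ! j) s)) =
    (\<Prod>j<length Y. elim_weight (\<alpha> ! j)) *
      (\<Sum>s\<in>ternary_lists n. \<Prod>c<n. of_bool (column_compatible Y \<alpha> c (s ! c)))"
    by (simp add: prod.distrib sum_distrib_left columnwise)
  also have "(\<Sum>s\<in>ternary_lists n. \<Prod>c<n. of_bool (column_compatible Y \<alpha> c (s ! c))) =
      (\<Prod>c<n. \<Sum>x\<in>{-1, 0, 1}. of_bool (column_compatible Y \<alpha> c x) :: int)"
    unfolding ternary_lists_def by (rule sum_lists_length_prod) simp
  also have "\<dots> = (\<Prod>c<n. if c \<in> ?Z then 3 else if c \<in> BSp n Y \<alpha> then 2 else 1)"
    using sum_column_compatible[OF assms] by (intro prod.cong) auto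
  also have "\<dots> = 3 ^ zcols n Y * 2 ^ card (BSp n Y \<alpha>)"
    unfolding zcols_def by (rule prod_lessThan_three_two) (auto simp: BSp_def)
  finally show ?thesis
    using prod_elim_weight[of \<alpha>] unfolding assms by simp
qed

definition jointly_eliminated :: "nat \<Rightarrow> int list set \<Rightarrow> int list set" where
  "jointly_eliminated n T = {s \<in> S n. \<forall>t\<in>T. eliminates n (map Some t) s}"

lemma sum_ternary_lists_jointly_eliminated:
  assumes "set Y \<subseteq> S n" "Y \<noteq> []"
  shows "(\<Sum>s\<in>ternary_lists n. of_bool (\<forall>t\<in>set Y. eliminates n (map Some t) s)) =
    2 * int (card (jointly_eliminated n (set Y)))"
proof -
  have len: "length t = n" if "t \<in> set Y" for t
    using that assms(1) S_subset_ternary_lists unfolding ternary_lists_def by auto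
  have "\<not> eliminates n (map Some t) (replicate n 0)" if "t \<in> set Y" for t
    using len[OF that] by (simp add: eliminates_map_Some_iff)
  then have zero: "\<not> (\<forall>t\<in>set Y. eliminates n (map Some t) (replicate n 0))"
    using hd_in_set[OF assms(2)] by blast
  have "(\<Sum>s\<in>ternary_lists n. of_bool (\<forall>t\<in>set Y. eliminates n (map Some t) s)) =
      of_bool (\<forall>t\<in>set Y. eliminates n (map Some t) (replicate n 0)) +
      2 * (\<Sum>s\<in>S n. of_bool (\<forall>t\<in>set Y. eliminates n (map Some t) s) :: int)"
    by (rule sum_ternary_lists_symmetric) (simp add: ternary_lists_def eliminates_uminus len)
  also have "\<dots> = 2 * int (card (jointly_eliminated n (set Y)))"
    using zero finite_S by (simp add: jointly_eliminated_def Collect_conj_eq)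
  finally show ?thesis .
qed

lemma sum_ternary_lists_jointly_eliminated_expand:
  assumes "set Y \<subseteq> S n"
  shows "(\<Sum>s\<in>ternary_lists n. of_bool (\<forall>t\<in>set Y. eliminates n (map Some t) s)) =
    (3 :: int) ^ zcols n Y * (\<Sum>\<alpha>\<in>ternary_lists (length Y). (-2) ^ zcount \<alpha> * 2 ^ card (BSp n Y \<alpha>))"
proof -
  let ?k = "length Y"
  have len: "length (Y ! j) = n" if "j < ?k" for j
    using that assms S_subset_ternary_lists nth_mem unfolding ternary_lists_def by blast
  have "(\<Sum>s\<in>ternary_lists n. of_bool (\<forall>t\<in>set Y. eliminates n (map Some t) s)) =
      (\<Sum>s\<in>ternary_lists n. \<Sum>\<alpha>\<in>ternary_lists ?k. \<Prod>j<?k.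
        elim_weight (\<alpha> ! j) * of_bool (scaled_on_support n (Y ! j) (\<alpha> ! j) s))"
    unfolding all_set_conv_all_nth using of_bool_eliminates_all[of ?k Y n] len by simp
  also have "\<dots> = (\<Sum>\<alpha>\<in>ternary_lists ?k. \<Sum>s\<in>ternary_lists n. \<Prod>j<?k.
        elim_weight (\<alpha> ! j) * of_bool (scaled_on_support n (Y ! j) (\<alpha> ! j) s))"
    by (rule sum.swap)
  also have "\<dots> = (\<Sum>\<alpha>\<in>ternary_lists ?k. (-2) ^ zcount \<alpha> * (3 ^ zcols n Y * 2 ^ card (BSp n Y \<alpha>)))"
    using sum_ternary_lists_scaled_on_support by (intro sum.cong) (auto simp: ternary_lists_def)
  finally show ?thesis by (simp add: sum_distrib_left algebra_simps)
qed

lemma sum_ternary_lists_BSp: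
  "(\<Sum>\<alpha>\<in>ternary_lists (length Y). (-2::int) ^ zcount \<alpha> * 2 ^ card (BSp n Y \<alpha>)) =
    (-2) ^ length Y + 2 * (\<Sum>\<alpha>\<in>S (length Y). (-2) ^ zcount \<alpha> * 2 ^ card (BSp n Y \<alpha>))"
  by (subst sum_ternary_lists_symmetric)
    (auto simp: ternary_lists_def zcount_uminus BSp_uminus zcount_replicate_zero BSp_replicate_zero)

lemma card_jointly_eliminated:
  assumes "set Y \<subseteq> S n" "Y \<noteq> []"
  shows "(-1) ^ (length Y + 1) * int (card (jointly_eliminated n (set Y))) =
    3 ^ zcols n Y * (- (2 ^ (length Y - 1)) +
      (\<Sum>\<alpha>\<in>S (length Y). (-1) ^ (zcount \<alpha> + length Y + 1) * 2 ^ (zcount \<alpha> + card (BSp n Y \<alpha>))))"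
proof -
  let ?k = "length Y"
  define T where "T = (\<Sum>\<alpha>\<in>S ?k. (-2) ^ zcount \<alpha> * 2 ^ card (BSp n Y \<alpha>) :: int)"
  have count: "2 * int (card (jointly_eliminated n (set Y))) = 3 ^ zcols n Y * ((-2) ^ ?k + 2 * T)"
    using sum_ternary_lists_jointly_eliminated[OF assms] sum_ternary_lists_jointly_eliminated_expand[OF assms(1)]
    unfolding sum_ternary_lists_BSp T_def by simp
  have signs: "(-1) ^ (?k + 1) * T =
      (\<Sum>\<alpha>\<in>S ?k. (-1) ^ (zcount \<alpha> + ?k + 1) * 2 ^ (zcount \<alpha> + card (BSp n Y \<alpha>)))"
    unfolding T_def sum_distrib_left
    by (intro sum.cong) (simp_all add: power_add power_minus[of 2])
  have "(-1) ^ (?k + 1) * (-2) ^ ?k = - (2 ^ ?k :: int)"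
    by (simp add: power_mult_distrib[symmetric])
  also have "\<dots> = - (2 * 2 ^ (?k - 1))"
    using assms(2) by (cases ?k) simp_all
  finally have leading: "(-1) ^ (?k + 1) * (-2) ^ ?k = - (2 * 2 ^ (?k - 1) :: int)" .
  have "2 * ((-1) ^ (?k + 1) * int (card (jointly_eliminated n (set Y)))) =
      (-1) ^ (?k + 1) * (3 ^ zcols n Y * ((-2) ^ ?k + 2 * T))"
    by (simp add: count[symmetric])
  also have "\<dots> = 3 ^ zcols n Y * ((-1) ^ (?k + 1) * (-2) ^ ?k) + 2 * (3 ^ zcols n Y * ((-1) ^ (?k + 1) * T))"
    by (simp add: algebra_simps)
  also have "\<dots> = 2 * (3 ^ zcols n Y * (- (2 ^ (?k - 1)) + (-1) ^ (?k + 1) * T))"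
    unfolding leading by (simp add: algebra_simps)
  finally show ?thesis unfolding signs by simp
qed

lemma length_subrows: "length (subrows xs I) = card I"
  unfolding subrows_def by simp

lemma set_subrows: "finite I \<Longrightarrow> set (subrows xs I) = (\<lambda>i. xs ! i) ` I"
  unfolding subrows_def by simp

lemma set_subrows_subset: "I \<subseteq> {0..<length xs} \<Longrightarrow> set (subrows xs I) \<subseteq> set xs"
  using finite_subset[of I "{0..<length xs}"] by (auto simp: set_subrows)

lemma int_card_Elim_incl_excl:
  "int (card (Elim n (set xs))) =
    (\<Sum>I | I \<subseteq> {0..<length xs} \<and> I \<noteq> {}.
      (-1) ^ (card I + 1) * int (card (jointly_eliminated n (set (subrows xs I)))))"
proof -
  define G where "G i = {s. eliminates n (map Some (xs ! i)) s}" for i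
  define f where "f X = int (card (X \<inter> S n))" for X
  have additive: "f (X \<union> X') = f X + f X'" if "disjnt X X'" for X X'
    using that finite_S unfolding f_def disjnt_def
    by (simp add: Int_Un_distrib2 card_Un_disjoint disjoint_iff)
  have union: "Elim n (set xs) = \<Union> (G ` {0..<length xs}) \<inter> S n"
    unfolding Elim_def G_def set_conv_nth by fastforce
  have intersection: "jointly_eliminated n (set (subrows xs I)) = \<Inter> (G ` I) \<inter> S n"
    if "I \<subseteq> {0..<length xs}" "I \<noteq> {}" for I
    using that finite_subset[of I "{0..<length xs}"]
    unfolding jointly_eliminated_def G_def by (auto simp: set_subrows)
  have "int (card (Elim n (set xs))) = f (\<Union> (G ` {0..<length xs}))"
    unfolding f_def union ..
  also have "\<dots> = (\<Sum>I | I \<subseteq> {0..<length xs} \<and> I \<noteq> {}. (-1) ^ (card I + 1) * f (\<Inter> (G ` I)))"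
    by (rule Incl_Excl_UN[OF additive]) simp_all
  also have "\<dots> = (\<Sum>I | I \<subseteq> {0..<length xs} \<and> I \<noteq> {}.
      (-1) ^ (card I + 1) * int (card (jointly_eliminated n (set (subrows xs I)))))"
    unfolding f_def by (intro sum.cong refl) (simp add: intersection)
  finally show ?thesis .
qed

lemma card_jointly_eliminated_subrows:
  assumes "set xs \<subseteq> S n" "I \<subseteq> {0..<length xs}" "I \<noteq> {}"
  shows "(-1) ^ (card I + 1) * int (card (jointly_eliminated n (set (subrows xs I)))) =
    3 ^ zcols n (subrows xs I) * (- (2 ^ (card I - 1)) +
      (\<Sum>\<alpha>\<in>S (card I). (-1) ^ (zcount \<alpha> + card I + 1) *
        2 ^ (zcount \<alpha> + card (BSp n (subrows xs I) \<alpha>))))"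
proof -
  have "finite I" using assms(2) finite_subset by blast
  then have "subrows xs I \<noteq> []"
    using assms(3) length_subrows[of xs I] by auto
  then show ?thesis
    using card_jointly_eliminated[of "subrows xs I" n] set_subrows_subset[OF assms(2)] assms(1)
    by (simp add: length_subrows)
qed

theorem mainTheorem13:
  fixes n m :: nat and xs :: "int list list"
  assumes "m \<ge> 1" and "length xs = m" and "distinct xs" and "set xs \<subseteq> S n"
  shows "int (card (Elim n (set xs))) =
    (\<Sum>k=1..m. \<Sum>I\<in>{I. I \<subseteq> {0..<m} \<and> card I = k}.
       3 ^ zcols n (subrows xs I) *
       (- (2 ^ (k - 1)) +
        (\<Sum>\<alpha>\<in>S k. (-1) ^ (zcount \<alpha> + k + 1) *
             2 ^ (zcount \<alpha> + card (BSp n (subrows xs I) \<alpha>)))))"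
proof -
  define g :: "nat set \<Rightarrow> int" where "g I = 3 ^ zcols n (subrows xs I) * (- (2 ^ (card I - 1)) +
      (\<Sum>\<alpha>\<in>S (card I). (-1) ^ (zcount \<alpha> + card I + 1) *
        2 ^ (zcount \<alpha> + card (BSp n (subrows xs I) \<alpha>))))" for I
  have "int (card (Elim n (set xs))) = (\<Sum>I | I \<subseteq> {0..<m} \<and> I \<noteq> {}. g I)"
    unfolding int_card_Elim_incl_excl g_def assms(2)[symmetric]
    by (intro sum.cong refl card_jointly_eliminated_subrows[OF assms(4)]) auto
  also have "\<dots> = (\<Sum>k=1..m. \<Sum>I | I \<subseteq> {0..<m} \<and> card I = k. g I)"
    using sum_nonempty_subsets_by_card[of "{0..<m}" g] by simp
  finally show ?thesis
    unfolding g_def by simp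
qed

end
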